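(* Let $\sigma\in\{\textsf{Sup},\textsf{KK},\textsf{PSt},\textsf{St},\textsf{WF}\}$ and let $\mathcal T$ be a permaconsistent distributed theory. Then $\mathcal T$ is universally consistent under $\sigma$, i.e. every $\sigma$-model of $\mathcal T$ is universally consistent.
   Context: Standing setup (dAEL). $\Sigma=\Sigma_o\uplus\Sigma_s$ is a first-order vocabulary (objective and subjective symbols). A nonempty domain $D$ and a $\Sigma_o$-structure $I_o$ with domain $D$ are fixed, as is a set of agents $\mathcal{A}\subseteq D$. For each $A\in\mathcal{A}$ there is a constant $A\in\Sigma_o$ with $A^{I_o}=A$, and $\Sigma_o$ contains a unary predicate $\mathrm{Apred}$ with $\mathrm{Apred}^{I_o}=\mathcal{A}$. "Structure" means a $\Sigma$-structure with domain $D$ that agrees with $I_o$ on $\Sigma_o$. Formulas of dAEL are built from atoms $P(\bar t)$ ($P\in\Sigma$ or equality) using $\wedge,\neg,\forall x$, and the modal rule: if $\varphi$ is a formula and $t$ a term then $K_t\varphi$ is a formula ($\vee,\Rightarrow,\Leftrightarrow,\exists$ are the usual abbreviations). Truth values are $\mathbf t,\mathbf f,\mathbf u$ with truth order $\mathbf f<_t\mathbf u<_t\mathbf t$; $\mathbf t^{-1}=\mathbf f$, $\mathbf f^{-1}=\mathbf t$, $\mathbf u^{-1}=\mathbf u$. A possible world structure (PWS) is a set of structures; $Q_1\le_K Q_2$ iff $Q_2\subseteq Q_1$; $\bot$ denotes the set of all structures and $\top=\emptyset$. A distributed possible world structure (DPWS) is a family $\mathcal Q=(\mathcal Q_A)_{A\in\mathcal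 A}$ of PWSs, ordered pointwise by $\le_K$. A distributed belief pair (DBP) is a pair $\mathcal B=(\mathcal B^c,\mathcal B^l)$ of DPWSs; $(\mathcal P,\mathcal S)\le_p(\mathcal P',\mathcal S')$ iff $\mathcal P\le_K\mathcal P'$ and $\mathcal S'\le_K\mathcal S$. A DBP is consistent if $\mathcal B^c\le_K\mathcal B^l$ (i.e. $\mathcal B^l_A\subseteq\mathcal B^c_A$ for all $A$); DBPs are tacitly assumed consistent unless said otherwise, and a DPWS $\mathcal Q$ is identified with the exact DBP $(\mathcal Q,\mathcal Q)$. Two-valued value $\varphi^{\mathcal Q,I,a}$ (DPWS $\mathcal Q$, structure $I$, variable assignment $a$): standard first-order clauses for atoms, $\neg,\wedge,\forall$, and $(K_t\varphi)^{\mathcal Q,I,a}=\mathbf t$ iff $t^{I,a}\in\mathcal A$ and $\varphi^{\mathcal Q,J,a}=\mathbf t$ for every $J\in\mathcal Q_{t^{I,a}}$, otherwise $\mathbf f$. Three-valued value $\varphi^{\mathcal B,I,a}$ for any pair $\mathcal B$ of DPWSs: atoms get their two-valued value in $I$; $\neg$ is interpreted by ${}^{-1}$, and $\wedge$, $\forall$ by $\le_t$-greatest lower bound (Kleene); $(K_t\varphi)^{\mathcal B,I,a}$ is $\mathbf t$ if $t^{I,a}\in\mathcal A$ and $\varphi^{\mathcal B,J,a}=\mathbf t$ for all $J\in\mathcal B^c_{t^{I,a}}$; it is $\mathbf f$ if $t^{I,a}\notin\mathcal A$ or $\varphi^{\mathcal B,J,a}=\mathbf f$ for some $J\in\mathcal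 B^l_{t^{I,a}}$; and $\mathbf u$ otherwise. For sentences the assignment is omitted, and the value of a set of sentences is the $\le_t$-glb of the values of its members. A distributed theory is a family $\mathcal T=(\mathcal T_A)_{A\in\mathcal A}$ of sets of dAEL sentences. Operators: $D_{\mathcal T}(\mathcal Q)=(\{I:\mathcal T_A^{\mathcal Q,I}=\mathbf t\})_{A\in\mathcal A}$; $D^*_{\mathcal T}(\mathcal B)=(D^c_{\mathcal T}(\mathcal B),D^l_{\mathcal T}(\mathcal B))$ with $D^c_{\mathcal T}(\mathcal B)_A=\{I:\mathcal T_A^{\mathcal B,I}\ne\mathbf f\}$ and $D^l_{\mathcal T}(\mathcal B)_A=\{I:\mathcal T_A^{\mathcal B,I}=\mathbf t\}$; the stable operator $S_{\mathcal T}(\mathcal Q)$ is the $\le_K$-least fixpoint of $\mathcal Q'\mapsto D^c_{\mathcal T}((\mathcal Q',\mathcal Q))$. Models of $\mathcal T$ (w.r.t. $I_o$): a Sup-model is a DPWS fixpoint of $D_{\mathcal T}$; the KK-model is the $\le_p$-least fixpoint of $D^*_{\mathcal T}$; a PSt-model is a DBP $\mathcal B$ with $\mathcal B^c=S_{\mathcal T}(\mathcal B^l)$ and $\mathcal B^l=S_{\mathcal T}(\mathcal B^c)$; an St-model is a DPWS $\mathcal Q$ such that $(\mathcal Q,\mathcal Q)$ is a PSt-model; the WF-model is the $\le_p$-least PSt-model. Universal consistency: a DPWS $\mathcal Q$ is universally consistent if $\mathcal Q_A\neq\emptyset$ for all $A\in\mathcal A$; a DBP $\mathcal B$ is universally consistent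 if $\mathcal B^l$ is. Permaconsistency: $\mathcal T$ is permaconsistent if for each $A\in\mathcal A$ and each theory $T'$ obtained from $\mathcal T_A$ by replacing each occurrence of a subformula $K_t\varphi$ that is not nested under a modal operator by $\mathbf t$ or by $\mathbf f$ (independently per occurrence), $T'$ has a model that is a structure (i.e. expands $I_o$). *)

theory Defs
  imports Main
begin

text \<open>Vocabulary: function symbols of type 'f, predicate symbols of type 'p
  (arities are not tracked: interpretations are given on argument lists of any length).
  The objective part of the vocabulary is given by sets Fo (functions, incl. constants)
  and Po (predicates); all other symbols are subjective.\<close>

datatype 'f trm = Var nat | Fn 'f "'f trm list"

datatype ('f, 'p) form =
    Atom 'p "'f trm list"
  | Eq "'f trm" "'f trm"
  | Neg "('f, 'p) form"
  | Conj "('f, 'p) form" "('f, 'p) form"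
  | All nat "('f, 'p) form"
  | K "'f trm" "('f, 'p) form"

fun fv_trm :: "'f trm \<Rightarrow> nat set" where
  "fv_trm (Var n) = {n}"
| "fv_trm (Fn f ts) = (\<Union>t\<in>set ts. fv_trm t)"

fun fv :: "('f, 'p) form \<Rightarrow> nat set" where
  "fv (Atom P ts) = (\<Union>t\<in>set ts. fv_trm t)"
| "fv (Eq s t) = fv_trm s \<union> fv_trm t"
| "fv (Neg \<phi>) = fv \<phi>"
| "fv (Conj \<phi> \<psi>) = fv \<phi> \<union> fv \<psi>"
| "fv (All x \<phi>) = fv \<phi> - {x}"
| "fv (K t \<phi>) = fv_trm t \<union> fv \<phi>"

definition sentence :: "('f, 'p) form \<Rightarrow> bool" where
  "sentence \<phi> \<longleftrightarrow> fv \<phi> = {}"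

type_synonym ('f, 'p, 'd) intp = "('f \<Rightarrow> 'd list \<Rightarrow> 'd) \<times> ('p \<Rightarrow> 'd list \<Rightarrow> bool)"

text \<open>Domain D = UNIV :: 'd set. A structure is an interpretation agreeing with Io on the
  objective symbols.\<close>
definition structs :: "'f set \<Rightarrow> 'p set \<Rightarrow> ('f, 'p, 'd) intp \<Rightarrow> ('f, 'p, 'd) intp set" where
  "structs Fo Po Io = {I. (\<forall>f\<in>Fo. fst I f = fst Io f) \<and> (\<forall>P\<in>Po. snd I P = snd Io P)}"

fun teval :: "('f, 'p, 'd) intp \<Rightarrow> (nat \<Rightarrow> 'd) \<Rightarrow> 'f trm \<Rightarrow> 'd" where
  "teval I a (Var n) = a n"
| "teval I a (Fn f ts) = fst I f (map (teval I a) ts)"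

text \<open>Assignment used for sentences (irrelevant for closed formulas).\<close>
definition asg0 :: "nat \<Rightarrow> 'd" where "asg0 = (\<lambda>_. undefined)"

text \<open>A DPWS is a function from agents to sets of structures; only its values on the agent
  set Ag matter.\<close>
type_synonym ('f, 'p, 'd) dpws = "'d \<Rightarrow> ('f, 'p, 'd) intp set"

fun eval2 :: "'d set \<Rightarrow> ('f, 'p, 'd) dpws \<Rightarrow> ('f, 'p, 'd) intp \<Rightarrow> (nat \<Rightarrow> 'd)
              \<Rightarrow> ('f, 'p) form \<Rightarrow> bool" where
  "eval2 Ag Q I a (Atom P ts) = snd I P (map (teval I a) ts)"
| "eval2 Ag Q I a (Eq s t) = (teval I a s = teval I a t)"
| "eval2 Ag Q I a (Neg \<phi>) = (\<not> eval2 Ag Q I a \<phi>)"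
| "eval2 Ag Q I a (Conj \<phi> \<psi>) = (eval2 Ag Q I a \<phi> \<and> eval2 Ag Q I a \<psi>)"
| "eval2 Ag Q I a (All x \<phi>) = (\<forall>d. eval2 Ag Q I (a(x := d)) \<phi>)"
| "eval2 Ag Q I a (K t \<phi>) =
     (teval I a t \<in> Ag \<and> (\<forall>J\<in>Q (teval I a t). eval2 Ag Q J a \<phi>))"

datatype tv = TT | FF | UU

fun tinv :: "tv \<Rightarrow> tv" where
  "tinv TT = FF" | "tinv FF = TT" | "tinv UU = UU"

text \<open>Greatest lower bound w.r.t. the truth order FF < UU < TT.\<close>
definition tglb :: "tv set \<Rightarrow> tv" where
  "tglb S = (if FF \<in> S then FF else if UU \<in> S then UU else TT)"

fun eval3 :: "'d set \<Rightarrow> ('f, 'p, 'd) dpws \<Rightarrow> ('f, 'p, 'd) dpws \<Rightarrow> ('f, 'p, 'd) intp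
              \<Rightarrow> (nat \<Rightarrow> 'd) \<Rightarrow> ('f, 'p) form \<Rightarrow> tv" where
  "eval3 Ag Bc Bl I a (Atom P ts) = (if snd I P (map (teval I a) ts) then TT else FF)"
| "eval3 Ag Bc Bl I a (Eq s t) = (if teval I a s = teval I a t then TT else FF)"
| "eval3 Ag Bc Bl I a (Neg \<phi>) = tinv (eval3 Ag Bc Bl I a \<phi>)"
| "eval3 Ag Bc Bl I a (Conj \<phi> \<psi>) = tglb {eval3 Ag Bc Bl I a \<phi>, eval3 Ag Bc Bl I a \<psi>}"
| "eval3 Ag Bc Bl I a (All x \<phi>) = tglb {eval3 Ag Bc Bl I (a(x := d)) \<phi> | d. True}"
| "eval3 Ag Bc Bl I a (K t \<phi>) =
     (if teval I a t \<in> Ag \<and> (\<forall>J\<in>Bc (teval I a t). eval3 Ag Bc Bl J a \<phi> = TT) then TT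
      else if teval I a t \<notin> Ag \<or> (\<exists>J\<in>Bl (teval I a t). eval3 Ag Bc Bl J a \<phi> = FF) then FF
      else UU)"

definition is_dpws :: "'d set \<Rightarrow> ('f, 'p, 'd) intp set \<Rightarrow> ('f, 'p, 'd) dpws \<Rightarrow> bool" where
  "is_dpws Ag S Q \<longleftrightarrow> (\<forall>A\<in>Ag. Q A \<subseteq> S)"

definition eqA :: "'d set \<Rightarrow> ('f, 'p, 'd) dpws \<Rightarrow> ('f, 'p, 'd) dpws \<Rightarrow> bool" where
  "eqA Ag Q1 Q2 \<longleftrightarrow> (\<forall>A\<in>Ag. Q1 A = Q2 A)"

definition leK :: "'d set \<Rightarrow> ('f, 'p, 'd) dpws \<Rightarrow> ('f, 'p, 'd) dpws \<Rightarrow> bool" where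
  "leK Ag Q1 Q2 \<longleftrightarrow> (\<forall>A\<in>Ag. Q2 A \<subseteq> Q1 A)"

type_synonym ('f, 'p, 'd) dbp = "('f, 'p, 'd) dpws \<times> ('f, 'p, 'd) dpws"

definition is_dbp :: "'d set \<Rightarrow> ('f, 'p, 'd) intp set \<Rightarrow> ('f, 'p, 'd) dbp \<Rightarrow> bool" where
  "is_dbp Ag S B \<longleftrightarrow> is_dpws Ag S (fst B) \<and> is_dpws Ag S (snd B) \<and> leK Ag (fst B) (snd B)"

definition leP :: "'d set \<Rightarrow> ('f, 'p, 'd) dbp \<Rightarrow> ('f, 'p, 'd) dbp \<Rightarrow> bool" where
  "leP Ag B1 B2 \<longleftrightarrow> leK Ag (fst B1) (fst B2) \<and> leK Ag (snd B2) (snd B1)"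

type_synonym ('f, 'p, 'd) dtheory = "'d \<Rightarrow> ('f, 'p) form set"

definition Dop :: "'d set \<Rightarrow> ('f, 'p, 'd) intp set \<Rightarrow> ('f, 'p, 'd) dtheory
                   \<Rightarrow> ('f, 'p, 'd) dpws \<Rightarrow> ('f, 'p, 'd) dpws" where
  "Dop Ag S T Q = (\<lambda>A. {I\<in>S. \<forall>\<phi>\<in>T A. eval2 Ag Q I asg0 \<phi>})"

definition Dc :: "'d set \<Rightarrow> ('f, 'p, 'd) intp set \<Rightarrow> ('f, 'p, 'd) dtheory
                   \<Rightarrow> ('f, 'p, 'd) dbp \<Rightarrow> ('f, 'p, 'd) dpws" where
  "Dc Ag S T B = (\<lambda>A. {I\<in>S. \<forall>\<phi>\<in>T A. eval3 Ag (fst B) (snd B) I asg0 \<phi> \<noteq> FF})"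

definition Dl :: "'d set \<Rightarrow> ('f, 'p, 'd) intp set \<Rightarrow> ('f, 'p, 'd) dtheory
                   \<Rightarrow> ('f, 'p, 'd) dbp \<Rightarrow> ('f, 'p, 'd) dpws" where
  "Dl Ag S T B = (\<lambda>A. {I\<in>S. \<forall>\<phi>\<in>T A. eval3 Ag (fst B) (snd B) I asg0 \<phi> = TT})"

definition is_stable :: "'d set \<Rightarrow> ('f, 'p, 'd) intp set \<Rightarrow> ('f, 'p, 'd) dtheory
                   \<Rightarrow> ('f, 'p, 'd) dpws \<Rightarrow> ('f, 'p, 'd) dpws \<Rightarrow> bool" where
  "is_stable Ag S T Q R \<longleftrightarrow>
     is_dpws Ag S R \<and> eqA Ag (Dc Ag S T (R, Q)) R \<and>
     (\<forall>R'. is_dpws Ag S R' \<and> eqA Ag (Dc Ag S T (R', Q)) R' \<longrightarrow> leK Ag R R')"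

definition Sup_model :: "'d set \<Rightarrow> ('f, 'p, 'd) intp set \<Rightarrow> ('f, 'p, 'd) dtheory
                   \<Rightarrow> ('f, 'p, 'd) dpws \<Rightarrow> bool" where
  "Sup_model Ag S T Q \<longleftrightarrow> is_dpws Ag S Q \<and> eqA Ag (Dop Ag S T Q) Q"

definition Dstar_fix :: "'d set \<Rightarrow> ('f, 'p, 'd) intp set \<Rightarrow> ('f, 'p, 'd) dtheory
                   \<Rightarrow> ('f, 'p, 'd) dbp \<Rightarrow> bool" where
  "Dstar_fix Ag S T B \<longleftrightarrow> is_dbp Ag S B \<and>
     eqA Ag (Dc Ag S T B) (fst B) \<and> eqA Ag (Dl Ag S T B) (snd B)"

definition KK_model :: "'d set \<Rightarrow> ('f, 'p, 'd) intp set \<Rightarrow> ('f, 'p, 'd) dtheory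
                   \<Rightarrow> ('f, 'p, 'd) dbp \<Rightarrow> bool" where
  "KK_model Ag S T B \<longleftrightarrow> Dstar_fix Ag S T B \<and>
     (\<forall>B'. Dstar_fix Ag S T B' \<longrightarrow> leP Ag B B')"

definition PSt_model :: "'d set \<Rightarrow> ('f, 'p, 'd) intp set \<Rightarrow> ('f, 'p, 'd) dtheory
                   \<Rightarrow> ('f, 'p, 'd) dbp \<Rightarrow> bool" where
  "PSt_model Ag S T B \<longleftrightarrow> is_dbp Ag S B \<and>
     is_stable Ag S T (snd B) (fst B) \<and> is_stable Ag S T (fst B) (snd B)"

definition St_model :: "'d set \<Rightarrow> ('f, 'p, 'd) intp set \<Rightarrow> ('f, 'p, 'd) dtheory
                   \<Rightarrow> ('f, 'p, 'd) dpws \<Rightarrow> bool" where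
  "St_model Ag S T Q \<longleftrightarrow> PSt_model Ag S T (Q, Q)"

definition WF_model :: "'d set \<Rightarrow> ('f, 'p, 'd) intp set \<Rightarrow> ('f, 'p, 'd) dtheory
                   \<Rightarrow> ('f, 'p, 'd) dbp \<Rightarrow> bool" where
  "WF_model Ag S T B \<longleftrightarrow> PSt_model Ag S T B \<and>
     (\<forall>B'. PSt_model Ag S T B' \<longrightarrow> leP Ag B B')"

datatype semantics = Sup | KKsem | PSt | St | WF

text \<open>The \<sigma>-models of T, as DBPs (a DPWS Q is identified with the exact DBP (Q, Q)).\<close>
definition models :: "semantics \<Rightarrow> 'd set \<Rightarrow> ('f, 'p, 'd) intp set \<Rightarrow> ('f, 'p, 'd) dtheory
                   \<Rightarrow> ('f, 'p, 'd) dbp set" where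
  "models \<sigma> Ag S T = (case \<sigma> of
      Sup \<Rightarrow> {(Q, Q) | Q. Sup_model Ag S T Q}
    | KKsem \<Rightarrow> {B. KK_model Ag S T B}
    | PSt \<Rightarrow> {B. PSt_model Ag S T B}
    | St \<Rightarrow> {(Q, Q) | Q. St_model Ag S T Q}
    | WF \<Rightarrow> {B. WF_model Ag S T B})"

definition univ_consistent :: "'d set \<Rightarrow> ('f, 'p, 'd) dbp \<Rightarrow> bool" where
  "univ_consistent Ag B \<longleftrightarrow> (\<forall>A\<in>Ag. snd B A \<noteq> {})"

text \<open>Evaluation of a formula in which every occurrence of a modal subformula K t \<phi> not
  nested under a modal operator is replaced by a truth constant. Occurrences are identified
  by their position (a path in the syntax tree); ch assigns the chosen constant
  (True = t, False = f) to each position.\<close>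
fun repl_eval :: "(nat list \<Rightarrow> bool) \<Rightarrow> nat list \<Rightarrow> ('f, 'p, 'd) intp \<Rightarrow> (nat \<Rightarrow> 'd)
                  \<Rightarrow> ('f, 'p) form \<Rightarrow> bool" where
  "repl_eval ch p I a (Atom P ts) = snd I P (map (teval I a) ts)"
| "repl_eval ch p I a (Eq s t) = (teval I a s = teval I a t)"
| "repl_eval ch p I a (Neg \<phi>) = (\<not> repl_eval ch (p @ [0]) I a \<phi>)"
| "repl_eval ch p I a (Conj \<phi> \<psi>) = (repl_eval ch (p @ [0]) I a \<phi> \<and> repl_eval ch (p @ [1]) I a \<psi>)"
| "repl_eval ch p I a (All x \<phi>) = (\<forall>d. repl_eval ch (p @ [0]) I (a(x := d)) \<phi>)"
| "repl_eval ch p I a (K t \<phi>) = ch p"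

text \<open>Permaconsistency: for every agent A and every choice of replacements (independently per
  occurrence in each sentence of T A) the resulting theory has a model that is a structure.\<close>
definition permaconsistent :: "'d set \<Rightarrow> ('f, 'p, 'd) intp set \<Rightarrow> ('f, 'p, 'd) dtheory \<Rightarrow> bool" where
  "permaconsistent Ag S T \<longleftrightarrow>
     (\<forall>A\<in>Ag. \<forall>ch :: ('f, 'p) form \<Rightarrow> nat list \<Rightarrow> bool.
        \<exists>I\<in>S. \<forall>\<phi>\<in>T A. repl_eval (ch \<phi>) [] I asg0 \<phi>)"

end

theory Submission
  imports Defs
begin

text \<open>Replace every top-level modal occurrence by the truth constant that is least favourable
  for the formula: \<open>f\<close> at positive and \<open>t\<close> at negative occurrences. By permaconsistency the
  theory of each agent has a structure as model even after this replacement, and by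
  monotonicity of the connectives that structure satisfies the original theory whatever the
  modal subformulas evaluate to. Hence it belongs to the output of every operator, and every
  model, being a fixpoint of one of these operators, assigns each agent a nonempty set.\<close>

text \<open>Positions are numbered as in \<open>repl_eval\<close>; \<open>pol\<close> is the polarity of the formula.\<close>

fun worst_choice :: "bool \<Rightarrow> ('f, 'p) form \<Rightarrow> nat list \<Rightarrow> bool" where
  "worst_choice pol (Neg \<phi>) (0 # q) = worst_choice (\<not> pol) \<phi> q"
| "worst_choice pol (Conj \<phi> \<psi>) (0 # q) = worst_choice pol \<phi> q"
| "worst_choice pol (Conj \<phi> \<psi>) (Suc 0 # q) = worst_choice pol \<psi> q"
| "worst_choice pol (All x \<phi>) (0 # q) = worst_choice pol \<phi> q"
| "worst_choice pol (K t \<phi>) [] = (\<not> pol)"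
| "worst_choice pol _ _ = False"

lemma eval3_worst_choice:
  assumes "\<forall>q. ch (p @ q) = worst_choice pol \<phi> q"
    and "repl_eval ch p I a \<phi> = pol"
  shows "eval3 Ag Bc Bl I a \<phi> = (if pol then TT else FF)"
  using assms
proof (induction \<phi> arbitrary: pol p a)
  case (Neg \<phi>)
  have "\<forall>q. ch ((p @ [0]) @ q) = worst_choice (\<not> pol) \<phi> q" using Neg.prems(1) by simp
  from Neg.IH[OF this] Neg.prems(2) show ?case by (cases pol) auto
next
  case (Conj \<phi> \<psi>)
  have "\<forall>q. ch ((p @ [0]) @ q) = worst_choice pol \<phi> q"
    and "\<forall>q. ch ((p @ [1]) @ q) = worst_choice pol \<psi> q"
    using Conj.prems(1) by simp_all
  note IH\<phi> = Conj.IH(1)[OF this(1)] and IH\<psi> = Conj.IH(2)[OF this(2)]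
  show ?case
  proof (cases pol)
    case True
    then show ?thesis using Conj.prems(2) IH\<phi> IH\<psi> by (simp add: tglb_def)
  next
    case False
    then consider "\<not> repl_eval ch (p @ [0]) I a \<phi>" | "\<not> repl_eval ch (p @ [1]) I a \<psi>"
      using Conj.prems(2) by auto
    then show ?thesis
      by cases (use False IH\<phi> IH\<psi> in \<open>fastforce simp: tglb_def\<close>)+
  qed
next
  case (All x \<phi>)
  have shift: "\<forall>q. ch ((p @ [0]) @ q) = worst_choice pol \<phi> q" using All.prems(1) by simp
  show ?case
  proof (cases pol)
    case True
    then have "eval3 Ag Bc Bl I (a(x := d)) \<phi> = TT" for d
      using All.IH[OF shift] All.prems(2) by simp
    then show ?thesis using True by (auto simp: tglb_def)
  next
    case False
    then obtain e where "\<not> repl_eval ch (p @ [0]) I (a(x := e)) \<phi>"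
      using All.prems(2) by auto
    then have "eval3 Ag Bc Bl I (a(x := e)) \<phi> = FF"
      using All.IH[OF shift] False by fastforce
    then have "FF \<in> {eval3 Ag Bc Bl I (a(x := d)) \<phi> | d. True}"
      by (metis (mono_tags) mem_Collect_eq)
    then show ?thesis using False by (simp only: eval3.simps tglb_def if_True if_False)
  qed
next
  case (K t \<phi>)
  then show ?case by (metis append_Nil2 repl_eval.simps(6) worst_choice.simps(5))
qed auto

lemma eval3_exact_pair: "eval3 Ag Q Q I a \<phi> = (if eval2 Ag Q I a \<phi> then TT else FF)"
  by (induction \<phi> arbitrary: I a) (auto simp: tglb_def)

lemma permaconsistent_robust_model:
  assumes "permaconsistent Ag S T" and "A \<in> Ag"
  obtains I where "I \<in> S" and "\<And>Bc Bl \<phi>. \<phi> \<in> T A \<Longrightarrow> eval3 Ag Bc Bl I asg0 \<phi> = TT"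
proof -
  obtain I where "I \<in> S" and I: "\<forall>\<phi>\<in>T A. repl_eval (worst_choice True \<phi>) [] I asg0 \<phi>"
    using assms unfolding permaconsistent_def by blast
  have "eval3 Ag Bc Bl I asg0 \<phi> = TT" if "\<phi> \<in> T A" for Bc Bl \<phi>
    using eval3_worst_choice[of "worst_choice True \<phi>" "[]" True \<phi> I asg0] I that by simp
  with \<open>I \<in> S\<close> show thesis using that by blast
qed

lemma permaconsistent_operators_nonempty:
  assumes "permaconsistent Ag S T" and "A \<in> Ag"
  shows "Dc Ag S T B A \<noteq> {}" and "Dl Ag S T B A \<noteq> {}" and "Dop Ag S T Q A \<noteq> {}"
proof -
  obtain I where "I \<in> S" and I: "\<And>Bc Bl \<phi>. \<phi> \<in> T A \<Longrightarrow> eval3 Ag Bc Bl I asg0 \<phi> = TT"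
    using permaconsistent_robust_model[OF assms] by blast
  have "eval2 Ag Q I asg0 \<phi>" if "\<phi> \<in> T A" for \<phi>
    using I[OF that, of Q Q] by (simp add: eval3_exact_pair split: if_splits)
  with \<open>I \<in> S\<close> I have "I \<in> Dc Ag S T B A" "I \<in> Dl Ag S T B A" "I \<in> Dop Ag S T Q A"
    unfolding Dc_def Dl_def Dop_def by auto
  then show "Dc Ag S T B A \<noteq> {}" "Dl Ag S T B A \<noteq> {}" "Dop Ag S T Q A \<noteq> {}" by auto
qed

lemma PSt_model_univ_consistent:
  assumes "permaconsistent Ag S T" and "PSt_model Ag S T B"
  shows "univ_consistent Ag B"
  using assms permaconsistent_operators_nonempty(1)[OF assms(1), of _ "(snd B, fst B)"]
  unfolding univ_consistent_def PSt_model_def is_stable_def eqA_def by auto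

lemma KK_model_univ_consistent:
  assumes "permaconsistent Ag S T" and "KK_model Ag S T B"
  shows "univ_consistent Ag B"
  using assms permaconsistent_operators_nonempty(2)[OF assms(1), of _ B]
  unfolding univ_consistent_def KK_model_def Dstar_fix_def eqA_def by auto

lemma Sup_model_univ_consistent:
  assumes "permaconsistent Ag S T" and "Sup_model Ag S T Q"
  shows "univ_consistent Ag (Q, Q)"
  using assms permaconsistent_operators_nonempty(3)[OF assms(1), of _ Q]
  unfolding univ_consistent_def Sup_model_def eqA_def by auto

theorem mainTheorem4:
  fixes Ag :: "'d set"
    and Fo :: "'f set" and Po :: "'p set"
    and Io :: "('f, 'p, 'd) intp"
    and T :: "('f, 'p, 'd) dtheory"
    and \<sigma> :: semantics
    and B :: "('f, 'p, 'd) dbp"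
  assumes agent_consts: "\<forall>A\<in>Ag. \<exists>c\<in>Fo. fst Io c [] = A"
    and apred: "\<exists>ap\<in>Po. \<forall>d. snd Io ap [d] \<longleftrightarrow> d \<in> Ag"
    and sentences: "\<forall>A\<in>Ag. \<forall>\<phi>\<in>T A. sentence \<phi>"
    and perma: "permaconsistent Ag (structs Fo Po Io) T"
    and model: "B \<in> models \<sigma> Ag (structs Fo Po Io) T"
  shows "univ_consistent Ag B"
proof (cases \<sigma>)
  case Sup
  then show ?thesis using model Sup_model_univ_consistent[OF perma] by (auto simp: models_def)
next
  case KKsem
  then show ?thesis using model KK_model_univ_consistent[OF perma] by (auto simp: models_def)
next
  case PSt
  then show ?thesis using model PSt_model_univ_consistent[OF perma] by (auto simp: models_def)
next
  case St
  then show ?thesis using model PSt_model_univ_consistent[OF perma]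
    by (auto simp: models_def St_model_def)
next
  case WF
  then show ?thesis using model PSt_model_univ_consistent[OF perma]
    by (auto simp: models_def WF_model_def)
qed

end
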